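(* Let $V$ be a Majorana algebra generated by a set $A$ of Majorana axes, and let $a_0, a_1 \in A$ with $\tau(a_1) = 1$. Then the vector $a_0^{\sigma(a_1)}$ satisfies axioms M3–M7 (with $a_0^{\sigma(a_1)}$ in place of $a$), and $\tau(a_0^{\sigma(a_1)}) = \tau(a_0)^{\sigma(a_1)}$, where $\tau(a_0)^{\sigma(a_1)} = \sigma(a_1)^{-1}\tau(a_0)\sigma(a_1)$.
   Context: Let $V$ be a real vector space with a positive definite symmetric bilinear form $(\,,\,)$ and a bilinear commutative (non-associative) product $\cdot$ such that (M1) $(u, v\cdot w) = (u\cdot v, w)$ for all $u,v,w\in V$, and (M2) $(u\cdot u, v\cdot v)\ge (u\cdot v, u\cdot v)$ for all $u,v \in V$. For $a \in V$ and $\mu \in \mathbb{R}$ write $V_\mu^{(a)} = \{v \in V : a\cdot v = \mu v\}$. A nonzero $a\in V$ is said to satisfy axioms M3–M7 if: (M3) $(a,a)=1$ and $a\cdot a = a$; (M4) $V = V_1^{(a)}\oplus V_0^{(a)}\oplus V_{1/4}^{(a)} \oplus V_{1/32}^{(a)}$; (M5) $V_1^{(a)} = \mathbb{R}a$; (M6) the linear map $\tau(a)$ of $V$ acting as $+1$ on $V_1^{(a)}\oplus V_0^{(a)}\oplus V_{1/4}^{(a)}$ and as $-1$ on $V_{1/32}^{(a)}$ preserves the algebra product; (M7) on $V_+^{(a)} := V_1^{(a)}\oplus V_0^{(a)}\oplus V_{1/4}^{(a)}$, the linear map $\sigma(a)$ acting as $+1$ on $V_1^{(a)}\oplus V_0^{(a)}$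 and as $-1$ on $V_{1/4}^{(a)}$ preserves the restriction of the algebra product to $V_+^{(a)}$. Elements satisfying M3–M7 are called Majorana axes, and $\tau(a)$ the Majorana involution of $a$. A Majorana algebra is such a $V$ (satisfying M1, M2) that is generated as an algebra by a set $A$ of Majorana axes. Linear maps act on the right: $u^{g}$ denotes the image of $u$ under $g$. *)

theory Defs
  imports Complex_Main
begin

definition bilinear_map :: "('v::real_vector \<Rightarrow> 'v \<Rightarrow> 'w::real_vector) \<Rightarrow> bool" where
  "bilinear_map f \<longleftrightarrow>
     (\<forall>x y z. f (x + y) z = f x z + f y z) \<and>
     (\<forall>x y z. f x (y + z) = f x y + f x z) \<and>
     (\<forall>c x y. f (c *\<^sub>R x) y = c *\<^sub>R f x y) \<and>
     (\<forall>c x y. f x (c *\<^sub>R y) = c *\<^sub>R f x y)"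

definition majorana_space :: "('v::real_vector \<Rightarrow> 'v \<Rightarrow> real) \<Rightarrow> ('v \<Rightarrow> 'v \<Rightarrow> 'v) \<Rightarrow> bool" where
  "majorana_space B m \<longleftrightarrow>
     bilinear_map B \<and> (\<forall>u v. B u v = B v u) \<and> (\<forall>v. v \<noteq> 0 \<longrightarrow> B v v > 0) \<and>
     bilinear_map m \<and> (\<forall>u v. m u v = m v u) \<and>
     (\<forall>u v w. B u (m v w) = B (m u v) w) \<and>
     (\<forall>u v. B (m u u) (m v v) \<ge> B (m u v) (m u v))"

definition eigsp :: "('v::real_vector \<Rightarrow> 'v \<Rightarrow> 'v) \<Rightarrow> 'v \<Rightarrow> real \<Rightarrow> 'v set" where
  "eigsp m a \<mu> = {v. m a v = \<mu> *\<^sub>R v}"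

definition vplus :: "('v::real_vector \<Rightarrow> 'v \<Rightarrow> 'v) \<Rightarrow> 'v \<Rightarrow> 'v set" where
  "vplus m a = {x + y + z | x y z. x \<in> eigsp m a 1 \<and> y \<in> eigsp m a 0 \<and> z \<in> eigsp m a (1/4)}"

text \<open>The Majorana involution tau(a): +1 on V_1+V_0+V_{1/4}, -1 on V_{1/32}
  (meaningful when M4 holds).\<close>
definition tau :: "('v::real_vector \<Rightarrow> 'v \<Rightarrow> 'v) \<Rightarrow> 'v \<Rightarrow> 'v \<Rightarrow> 'v" where
  "tau m a v = (THE w. \<exists>x y z u. x \<in> eigsp m a 1 \<and> y \<in> eigsp m a 0 \<and>
       z \<in> eigsp m a (1/4) \<and> u \<in> eigsp m a (1/32) \<and> v = x + y + z + u \<and> w = x + y + z - u)"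

definition sigma :: "('v::real_vector \<Rightarrow> 'v \<Rightarrow> 'v) \<Rightarrow> 'v \<Rightarrow> 'v \<Rightarrow> 'v" where
  "sigma m a v = (THE w. \<exists>x y z. x \<in> eigsp m a 1 \<and> y \<in> eigsp m a 0 \<and>
       z \<in> eigsp m a (1/4) \<and> v = x + y + z \<and> w = x + y - z)"

definition majorana_axis :: "('v::real_vector \<Rightarrow> 'v \<Rightarrow> real) \<Rightarrow> ('v \<Rightarrow> 'v \<Rightarrow> 'v) \<Rightarrow> 'v \<Rightarrow> bool" where
  "majorana_axis B m a \<longleftrightarrow>
     a \<noteq> 0 \<and>
     \<comment> \<open>M3\<close>
     B a a = 1 \<and> m a a = a \<and>
     \<comment> \<open>M4: V is the direct sum of the four eigenspaces\<close>
     (\<forall>v. \<exists>!(x, y, z, u). x \<in> eigsp m a 1 \<and> y \<in> eigsp m a 0 \<and>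
          z \<in> eigsp m a (1/4) \<and> u \<in> eigsp m a (1/32) \<and> v = x + y + z + u) \<and>
     \<comment> \<open>M5\<close>
     eigsp m a 1 = range (\<lambda>c. c *\<^sub>R a) \<and>
     \<comment> \<open>M6\<close>
     (\<forall>u v. tau m a (m u v) = m (tau m a u) (tau m a v)) \<and>
     \<comment> \<open>M7\<close>
     (\<forall>u \<in> vplus m a. \<forall>v \<in> vplus m a. sigma m a (m u v) = m (sigma m a u) (sigma m a v))"

definition gen_subalg :: "('v::real_vector \<Rightarrow> 'v \<Rightarrow> 'v) \<Rightarrow> 'v set \<Rightarrow> 'v set" where
  "gen_subalg m A = \<Inter> {S. A \<subseteq> S \<and> 0 \<in> S \<and> (\<forall>x\<in>S. \<forall>y\<in>S. x + y \<in> S) \<and>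
       (\<forall>c. \<forall>x\<in>S. c *\<^sub>R x \<in> S) \<and> (\<forall>x\<in>S. \<forall>y\<in>S. m x y \<in> S)}"

definition majorana_algebra :: "('v::real_vector \<Rightarrow> 'v \<Rightarrow> real) \<Rightarrow> ('v \<Rightarrow> 'v \<Rightarrow> 'v) \<Rightarrow> 'v set \<Rightarrow> bool" where
  "majorana_algebra B m A \<longleftrightarrow> majorana_space B m \<and> (\<forall>a\<in>A. majorana_axis B m a) \<and>
     gen_subalg m A = UNIV"

end

theory Submission
  imports Defs "HOL-Analysis.Linear_Algebra"
begin

(* Since tau(a1) = 1, the eigenspace V_{1/32} of a1 is zero, so V = V_+ and sigma(a1) is
   defined on all of V. By M7 it is then an algebra automorphism; it is an involution, and an
   isometry because eigenspaces of a1 for distinct eigenvalues are orthogonal (M1).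
   Any isometric algebra automorphism g carries the eigenspaces of an axis a onto those of g a,
   so g a again satisfies M3-M7 and tau(g a) = g tau(a) g^-1. *)

lemma bilinear_map_imp_bilinear: "bilinear_map f \<Longrightarrow> bilinear f"
  unfolding bilinear_map_def bilinear_def linear_iff by auto

lemma majorana_space_bilinear:
  assumes "majorana_space B m"
  shows "bilinear B" "bilinear m"
  using assms bilinear_map_imp_bilinear unfolding majorana_space_def by blast+

lemma subspace_eigsp: "bilinear m \<Longrightarrow> subspace (eigsp m a \<mu>)"
  by (auto simp: subspace_def eigsp_def bilinear_radd bilinear_rmul bilinear_rzero scaleR_add_right)

lemma eigsp_orthogonal:
  assumes "majorana_space B m" "p \<in> eigsp m a \<mu>" "q \<in> eigsp m a \<nu>" "\<mu> \<noteq> \<nu>"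
  shows "B p q = 0"
proof -
  have B: "bilinear B"
    using assms(1) by (rule majorana_space_bilinear)
  have "m p a = m a p" "B p (m a q) = B (m p a) q"
    using assms(1) unfolding majorana_space_def by blast+
  then have "B p (\<nu> *\<^sub>R q) = B (\<mu> *\<^sub>R p) q"
    using assms(2,3) unfolding eigsp_def by simp
  then have "\<nu> * B p q = \<mu> * B p q"
    by (simp add: bilinear_lmul[OF B] bilinear_rmul[OF B])
  then show ?thesis
    using assms(4) by simp
qed

definition direct_sum4 :: "'a::plus set \<Rightarrow> 'a set \<Rightarrow> 'a set \<Rightarrow> 'a set \<Rightarrow> bool" where
  "direct_sum4 V\<^sub>1 V\<^sub>2 V\<^sub>3 V\<^sub>4 \<longleftrightarrow>
     (\<forall>v. \<exists>!(x, y, z, u). x \<in> V\<^sub>1 \<and> y \<in> V\<^sub>2 \<and> z \<in> V\<^sub>3 \<and> u \<in> V\<^sub>4 \<and> v = x + y + z + u)"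

lemma direct_sum4I:
  assumes "\<And>v. \<exists>x y z u. x \<in> V\<^sub>1 \<and> y \<in> V\<^sub>2 \<and> z \<in> V\<^sub>3 \<and> u \<in> V\<^sub>4 \<and> v = x + y + z + u"
    and "\<And>x y z u x' y' z' u'. x \<in> V\<^sub>1 \<Longrightarrow> y \<in> V\<^sub>2 \<Longrightarrow> z \<in> V\<^sub>3 \<Longrightarrow> u \<in> V\<^sub>4 \<Longrightarrow>
      x' \<in> V\<^sub>1 \<Longrightarrow> y' \<in> V\<^sub>2 \<Longrightarrow> z' \<in> V\<^sub>3 \<Longrightarrow> u' \<in> V\<^sub>4 \<Longrightarrow>
      x + y + z + u = x' + y' + z' + u' \<Longrightarrow> x = x' \<and> y = y' \<and> z = z' \<and> u = u'"
  shows "direct_sum4 V\<^sub>1 V\<^sub>2 V\<^sub>3 V\<^sub>4"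
  unfolding direct_sum4_def
proof
  fix v
  show "\<exists>!(x, y, z, u). x \<in> V\<^sub>1 \<and> y \<in> V\<^sub>2 \<and> z \<in> V\<^sub>3 \<and> u \<in> V\<^sub>4 \<and> v = x + y + z + u"
  proof (rule ex_ex1I)
    show "\<exists>t. case t of (x, y, z, u) \<Rightarrow> x \<in> V\<^sub>1 \<and> y \<in> V\<^sub>2 \<and> z \<in> V\<^sub>3 \<and> u \<in> V\<^sub>4 \<and> v = x + y + z + u"
      using assms(1)[of v] by auto
  next
    fix t t'
    assume "case t of (x, y, z, u) \<Rightarrow> x \<in> V\<^sub>1 \<and> y \<in> V\<^sub>2 \<and> z \<in> V\<^sub>3 \<and> u \<in> V\<^sub>4 \<and> v = x + y + z + u"
      and "case t' of (x, y, z, u) \<Rightarrow> x \<in> V\<^sub>1 \<and> y \<in> V\<^sub>2 \<and> z \<in> V\<^sub>3 \<and> u \<in> V\<^sub>4 \<and> v = x + y + z + u"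
    then show "t = t'"
      using assms(2) by (cases t, cases t') auto
  qed
qed

lemma direct_sum4_exists:
  assumes "direct_sum4 V\<^sub>1 V\<^sub>2 V\<^sub>3 V\<^sub>4"
  obtains x y z u where "x \<in> V\<^sub>1" "y \<in> V\<^sub>2" "z \<in> V\<^sub>3" "u \<in> V\<^sub>4" "v = x + y + z + u"
  using assms unfolding direct_sum4_def by blast

lemma direct_sum4_unique:
  assumes "direct_sum4 V\<^sub>1 V\<^sub>2 V\<^sub>3 V\<^sub>4"
    and "x \<in> V\<^sub>1" "y \<in> V\<^sub>2" "z \<in> V\<^sub>3" "u \<in> V\<^sub>4" "x' \<in> V\<^sub>1" "y' \<in> V\<^sub>2" "z' \<in> V\<^sub>3" "u' \<in> V\<^sub>4"
    and "x + y + z + u = x' + y' + z' + u'"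
  shows "x = x' \<and> y = y' \<and> z = z' \<and> u = u'"
proof -
  let ?P = "\<lambda>(x, y, z, u). x \<in> V\<^sub>1 \<and> y \<in> V\<^sub>2 \<and> z \<in> V\<^sub>3 \<and> u \<in> V\<^sub>4 \<and> x' + y' + z' + u' = x + y + z + u"
  have "\<exists>!t. ?P t"
    using assms(1) unfolding direct_sum4_def by (rule spec)
  moreover have "?P (x, y, z, u)" "?P (x', y', z', u')"
    using assms(2-10) by simp_all
  ultimately have "(x, y, z, u) = (x', y', z', u')"
    by (blast elim: ex1E)
  then show ?thesis
    by simp
qed

lemma direct_sum4_image:
  assumes "linear g" "bij g" "direct_sum4 V\<^sub>1 V\<^sub>2 V\<^sub>3 V\<^sub>4"
  shows "direct_sum4 (g ` V\<^sub>1) (g ` V\<^sub>2) (g ` V\<^sub>3) (g ` V\<^sub>4)"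
proof (rule direct_sum4I)
  fix v
  obtain w where v: "v = g w"
    using assms(2) by (metis bij_pointE)
  obtain x y z u where "x \<in> V\<^sub>1" "y \<in> V\<^sub>2" "z \<in> V\<^sub>3" "u \<in> V\<^sub>4" "w = x + y + z + u"
    using assms(3) by (rule direct_sum4_exists)
  moreover from this have "v = g x + g y + g z + g u"
    using v assms(1) by (simp add: linear_add)
  ultimately show "\<exists>x y z u. x \<in> g ` V\<^sub>1 \<and> y \<in> g ` V\<^sub>2 \<and> z \<in> g ` V\<^sub>3 \<and> u \<in> g ` V\<^sub>4 \<and>
      v = x + y + z + u"
    by blast
next
  fix x y z u x' y' z' u'
  assume "x \<in> g ` V\<^sub>1" "y \<in> g ` V\<^sub>2" "z \<in> g ` V\<^sub>3" "u \<in> g ` V\<^sub>4"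
    "x' \<in> g ` V\<^sub>1" "y' \<in> g ` V\<^sub>2" "z' \<in> g ` V\<^sub>3" "u' \<in> g ` V\<^sub>4"
    and eq: "x + y + z + u = x' + y' + z' + u'"
  then obtain x\<^sub>0 y\<^sub>0 z\<^sub>0 u\<^sub>0 x\<^sub>0' y\<^sub>0' z\<^sub>0' u\<^sub>0' where
    mem: "x\<^sub>0 \<in> V\<^sub>1" "y\<^sub>0 \<in> V\<^sub>2" "z\<^sub>0 \<in> V\<^sub>3" "u\<^sub>0 \<in> V\<^sub>4"
      "x\<^sub>0' \<in> V\<^sub>1" "y\<^sub>0' \<in> V\<^sub>2" "z\<^sub>0' \<in> V\<^sub>3" "u\<^sub>0' \<in> V\<^sub>4"
    and pre: "x = g x\<^sub>0" "y = g y\<^sub>0" "z = g z\<^sub>0" "u = g u\<^sub>0"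
      "x' = g x\<^sub>0'" "y' = g y\<^sub>0'" "z' = g z\<^sub>0'" "u' = g u\<^sub>0'"
    by (elim imageE)
  have "g (x\<^sub>0 + y\<^sub>0 + z\<^sub>0 + u\<^sub>0) = g (x\<^sub>0' + y\<^sub>0' + z\<^sub>0' + u\<^sub>0')"
    using eq assms(1) by (simp add: pre linear_add)
  then have "x\<^sub>0 + y\<^sub>0 + z\<^sub>0 + u\<^sub>0 = x\<^sub>0' + y\<^sub>0' + z\<^sub>0' + u\<^sub>0'"
    using assms(2) by (simp add: bij_is_inj inj_eq)
  then show "x = x' \<and> y = y' \<and> z = z' \<and> u = u'"
    using direct_sum4_unique[OF assms(3) mem] pre by simp
qed

abbreviation eigsp_direct_sum :: "('v::real_vector \<Rightarrow> 'v \<Rightarrow> 'v) \<Rightarrow> 'v \<Rightarrow> bool" where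
  "eigsp_direct_sum m a \<equiv>
     direct_sum4 (eigsp m a 1) (eigsp m a 0) (eigsp m a (1/4)) (eigsp m a (1/32))"

lemma majorana_axis_eigsp_direct_sum: "majorana_axis B m a \<Longrightarrow> eigsp_direct_sum m a"
  unfolding majorana_axis_def direct_sum4_def by (elim conjE)

lemma tau_eq:
  assumes "eigsp_direct_sum m a"
    and "x \<in> eigsp m a 1" "y \<in> eigsp m a 0" "z \<in> eigsp m a (1/4)" "u \<in> eigsp m a (1/32)"
  shows "tau m a (x + y + z + u) = x + y + z - u"
  unfolding tau_def
proof (rule the_equality)
  show "\<exists>x' y' z' u'. x' \<in> eigsp m a 1 \<and> y' \<in> eigsp m a 0 \<and> z' \<in> eigsp m a (1/4) \<and>
      u' \<in> eigsp m a (1/32) \<and> x + y + z + u = x' + y' + z' + u' \<and> x + y + z - u = x' + y' + z' - u'"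
    using assms by blast
next
  fix w
  assume "\<exists>x' y' z' u'. x' \<in> eigsp m a 1 \<and> y' \<in> eigsp m a 0 \<and> z' \<in> eigsp m a (1/4) \<and>
      u' \<in> eigsp m a (1/32) \<and> x + y + z + u = x' + y' + z' + u' \<and> w = x' + y' + z' - u'"
  then obtain x' y' z' u' where "x' \<in> eigsp m a 1" "y' \<in> eigsp m a 0" "z' \<in> eigsp m a (1/4)"
      "u' \<in> eigsp m a (1/32)" "x + y + z + u = x' + y' + z' + u'" "w = x' + y' + z' - u'"
    by blast
  then show "w = x + y + z - u"
    using direct_sum4_unique[OF assms] by simp
qed

lemma sigma_eq:
  assumes "bilinear m" "eigsp_direct_sum m a"
    and "x \<in> eigsp m a 1" "y \<in> eigsp m a 0" "z \<in> eigsp m a (1/4)"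
  shows "sigma m a (x + y + z) = x + y - z"
  unfolding sigma_def
proof (rule the_equality)
  show "\<exists>x' y' z'. x' \<in> eigsp m a 1 \<and> y' \<in> eigsp m a 0 \<and> z' \<in> eigsp m a (1/4) \<and>
      x + y + z = x' + y' + z' \<and> x + y - z = x' + y' - z'"
    using assms by blast
next
  have zero: "0 \<in> eigsp m a (1/32)"
    using assms(1) by (intro subspace_0 subspace_eigsp)
  fix w
  assume "\<exists>x' y' z'. x' \<in> eigsp m a 1 \<and> y' \<in> eigsp m a 0 \<and> z' \<in> eigsp m a (1/4) \<and>
      x + y + z = x' + y' + z' \<and> w = x' + y' - z'"
  then obtain x' y' z' where "x' \<in> eigsp m a 1" "y' \<in> eigsp m a 0" "z' \<in> eigsp m a (1/4)"
      "x + y + z + 0 = x' + y' + z' + 0" "w = x' + y' - z'"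
    by auto
  then show "w = x + y - z"
    using direct_sum4_unique[OF assms(2-5) zero _ _ _ zero] by simp
qed

lemma vplus_decomp:
  assumes "v \<in> vplus m a"
  obtains x y z where "x \<in> eigsp m a 1" "y \<in> eigsp m a 0" "z \<in> eigsp m a (1/4)" "v = x + y + z"
  using assms unfolding vplus_def by blast

lemma tau_eq_self_iff:
  assumes "bilinear m" "eigsp_direct_sum m a"
  shows "tau m a v = v \<longleftrightarrow> v \<in> vplus m a"
proof -
  have zero: "0 \<in> eigsp m a (1/32)"
    using assms(1) by (intro subspace_0 subspace_eigsp)
  obtain x y z u where xyzu: "x \<in> eigsp m a 1" "y \<in> eigsp m a 0" "z \<in> eigsp m a (1/4)"
      "u \<in> eigsp m a (1/32)" and v: "v = x + y + z + u"
    using assms(2) by (rule direct_sum4_exists)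
  show ?thesis
  proof
    assume "tau m a v = v"
    then have "x + y + z - u = x + y + z + u"
      using tau_eq[OF assms(2) xyzu] v by simp
    then have "u = - u"
      by (metis add_left_cancel diff_conv_add_uminus)
    then have "u = 0"
      by (simp add: eq_neg_iff_add_eq_0 flip: scaleR_2)
    then show "v \<in> vplus m a"
      using xyzu v unfolding vplus_def by auto
  next
    assume "v \<in> vplus m a"
    then obtain x' y' z' where "x' \<in> eigsp m a 1" "y' \<in> eigsp m a 0" "z' \<in> eigsp m a (1/4)"
        and "v = x' + y' + z' + 0"
      by (auto elim: vplus_decomp)
    then show "tau m a v = v"
      using tau_eq[OF assms(2) _ _ _ zero] by simp
  qed
qed

lemma vplus_mult_closed:
  assumes "bilinear m" "eigsp_direct_sum m a"
    and "\<forall>u v. tau m a (m u v) = m (tau m a u) (tau m a v)"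
    and "u \<in> vplus m a" "v \<in> vplus m a"
  shows "m u v \<in> vplus m a"
  using assms by (simp flip: tau_eq_self_iff)

context
  fixes m :: "'v::real_vector \<Rightarrow> 'v \<Rightarrow> 'v" and a :: 'v
  assumes bilinear: "bilinear m" and direct_sum: "eigsp_direct_sum m a"
begin

lemma sigma_involutive:
  assumes "v \<in> vplus m a"
  shows "sigma m a (sigma m a v) = v"
proof -
  obtain x y z where xyz: "x \<in> eigsp m a 1" "y \<in> eigsp m a 0" "z \<in> eigsp m a (1/4)"
      and v: "v = x + y + z"
    using assms by (rule vplus_decomp)
  have "- z \<in> eigsp m a (1/4)"
    using xyz(3) bilinear by (intro subspace_neg subspace_eigsp)
  then have "sigma m a (x + y + - z) = x + y - - z"
    using sigma_eq[OF bilinear direct_sum xyz(1,2)] by blast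
  then show ?thesis
    using sigma_eq[OF bilinear direct_sum xyz] v by simp
qed

lemma sigma_add:
  assumes "v \<in> vplus m a" "w \<in> vplus m a"
  shows "sigma m a (v + w) = sigma m a v + sigma m a w"
proof -
  obtain x y z where xyz: "x \<in> eigsp m a 1" "y \<in> eigsp m a 0" "z \<in> eigsp m a (1/4)"
      and v: "v = x + y + z"
    using assms(1) by (rule vplus_decomp)
  obtain x' y' z' where xyz': "x' \<in> eigsp m a 1" "y' \<in> eigsp m a 0" "z' \<in> eigsp m a (1/4)"
      and w: "w = x' + y' + z'"
    using assms(2) by (rule vplus_decomp)
  have "sigma m a (v + w) = sigma m a ((x + x') + (y + y') + (z + z'))"
    by (simp add: v w algebra_simps)
  also have "\<dots> = (x + x') + (y + y') - (z + z')"
    using xyz xyz' bilinear by (intro sigma_eq[OF bilinear direct_sum] subspace_add subspace_eigsp)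
  also have "\<dots> = (x + y - z) + (x' + y' - z')"
    by (simp add: algebra_simps)
  finally show ?thesis
    using sigma_eq[OF bilinear direct_sum xyz] sigma_eq[OF bilinear direct_sum xyz'] v w by simp
qed

lemma sigma_scaleR:
  assumes "v \<in> vplus m a"
  shows "sigma m a (c *\<^sub>R v) = c *\<^sub>R sigma m a v"
proof -
  obtain x y z where xyz: "x \<in> eigsp m a 1" "y \<in> eigsp m a 0" "z \<in> eigsp m a (1/4)"
      and v: "v = x + y + z"
    using assms by (rule vplus_decomp)
  have "sigma m a (c *\<^sub>R v) = sigma m a (c *\<^sub>R x + c *\<^sub>R y + c *\<^sub>R z)"
    by (simp add: v scaleR_add_right)
  also have "\<dots> = c *\<^sub>R x + c *\<^sub>R y - c *\<^sub>R z"
    using xyz bilinear by (intro sigma_eq[OF bilinear direct_sum] subspace_scale subspace_eigsp)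
  finally show ?thesis
    using sigma_eq[OF bilinear direct_sum xyz] v by (simp add: scaleR_add_right scaleR_diff_right)
qed

lemma sigma_isometry:
  assumes "majorana_space B m" "v \<in> vplus m a" "w \<in> vplus m a"
  shows "B (sigma m a v) (sigma m a w) = B v w"
proof -
  have B: "bilinear B"
    using assms(1) by (rule majorana_space_bilinear)
  obtain x y z where xyz: "x \<in> eigsp m a 1" "y \<in> eigsp m a 0" "z \<in> eigsp m a (1/4)"
      and v: "v = x + y + z"
    using assms(2) by (rule vplus_decomp)
  obtain x' y' z' where xyz': "x' \<in> eigsp m a 1" "y' \<in> eigsp m a 0" "z' \<in> eigsp m a (1/4)"
      and w: "w = x' + y' + z'"
    using assms(3) by (rule vplus_decomp)
  define p q where "p = x + y" and "q = x' + y'"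
  have "B p z' = 0" "B z q = 0"
    using eigsp_orthogonal[OF assms(1)] xyz xyz'
    by (simp_all add: p_def q_def bilinear_ladd[OF B] bilinear_radd[OF B])
  then have "B (p - z) (q - z') = B (p + z) (q + z')"
    by (simp add: bilinear_lsub[OF B] bilinear_rsub[OF B] bilinear_ladd[OF B] bilinear_radd[OF B])
  moreover have "sigma m a v = p - z" "sigma m a w = q - z'"
    using sigma_eq[OF bilinear direct_sum xyz] sigma_eq[OF bilinear direct_sum xyz']
    unfolding v w p_def q_def by simp_all
  ultimately show ?thesis
    unfolding v w p_def q_def by simp
qed

end

locale algebra_automorphism =
  fixes m :: "'v::real_vector \<Rightarrow> 'v \<Rightarrow> 'v" and g :: "'v \<Rightarrow> 'v"
  assumes linear: "linear g" and bij: "bij g" and mult: "g (m u v) = m (g u) (g v)"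
begin

lemma inj: "inj g"
  using bij by (rule bij_is_inj)

lemma apply_inv [simp]: "g (inv g v) = v"
  using bij by (simp add: bij_is_surj surj_f_inv_f)

lemma inv_mult: "inv g (m u v) = m (inv g u) (inv g v)"
  using inj by (intro inv_f_eq) (simp_all add: mult)

lemma eigsp_image: "eigsp m (g a) \<mu> = g ` eigsp m a \<mu>"
proof -
  have mem: "g w \<in> eigsp m (g a) \<mu> \<longleftrightarrow> w \<in> eigsp m a \<mu>" for w
    using inj by (simp add: eigsp_def inj_eq flip: mult linear_scale[OF linear])
  show ?thesis
  proof (intro set_eqI iffI)
    fix v
    assume "v \<in> eigsp m (g a) \<mu>"
    then show "v \<in> g ` eigsp m a \<mu>"
      using mem[of "inv g v"] by (metis apply_inv image_eqI)
  qed (use mem in auto)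
qed

lemma vplus_image: "vplus m (g a) = g ` vplus m a"
  unfolding vplus_def eigsp_image
  by (force simp: linear_add[OF linear] intro!: image_eqI)

lemma eigsp_direct_sum_image:
  "eigsp_direct_sum m a \<Longrightarrow> eigsp_direct_sum m (g a)"
  unfolding eigsp_image by (rule direct_sum4_image[OF linear bij])

lemma tau_image:
  assumes "eigsp_direct_sum m a"
  shows "tau m (g a) = g \<circ> tau m a \<circ> inv g"
proof
  fix v
  obtain x y z u where xyzu: "x \<in> eigsp m a 1" "y \<in> eigsp m a 0" "z \<in> eigsp m a (1/4)"
      "u \<in> eigsp m a (1/32)" and v: "inv g v = x + y + z + u"
    using assms by (rule direct_sum4_exists)
  have "v = g x + g y + g z + g u"
    using arg_cong[OF v, of g] by (simp add: linear_add[OF linear])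
  then have "tau m (g a) v = g x + g y + g z - g u"
    using tau_eq[OF eigsp_direct_sum_image[OF assms]] xyzu by (simp add: eigsp_image)
  also have "\<dots> = g (tau m a (inv g v))"
    using tau_eq[OF assms xyzu] by (simp add: v linear_add[OF linear] linear_diff[OF linear])
  finally show "tau m (g a) v = (g \<circ> tau m a \<circ> inv g) v"
    by simp
qed

lemma sigma_image:
  assumes "bilinear m" "eigsp_direct_sum m a" "v \<in> vplus m a"
  shows "sigma m (g a) (g v) = g (sigma m a v)"
proof -
  obtain x y z where xyz: "x \<in> eigsp m a 1" "y \<in> eigsp m a 0" "z \<in> eigsp m a (1/4)"
      and v: "v = x + y + z"
    using assms(3) by (rule vplus_decomp)
  have "sigma m (g a) (g x + g y + g z) = g x + g y - g z"
    using sigma_eq[OF assms(1) eigsp_direct_sum_image[OF assms(2)]] xyz by (simp add: eigsp_image)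
  then show ?thesis
    using sigma_eq[OF assms(1,2) xyz] by (simp add: v linear_add[OF linear] linear_diff[OF linear])
qed

lemma majorana_axis_image:
  assumes "majorana_space B m" and isometry: "\<And>u v. B (g u) (g v) = B u v"
    and "majorana_axis B m a"
  shows "majorana_axis B m (g a)"
proof -
  have bilinear: "bilinear m"
    using assms(1) by (rule majorana_space_bilinear)
  have direct_sum: "eigsp_direct_sum m a"
    using assms(3) by (rule majorana_axis_eigsp_direct_sum)
  have axis: "a \<noteq> 0" "B a a = 1" "m a a = a" "eigsp m a 1 = range (\<lambda>c. c *\<^sub>R a)"
    and tau_mult: "\<forall>u v. tau m a (m u v) = m (tau m a u) (tau m a v)"
    and sigma_mult: "\<forall>u\<in>vplus m a. \<forall>v\<in>vplus m a. sigma m a (m u v) = m (sigma m a u) (sigma m a v)"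
    using assms(3) unfolding majorana_axis_def by blast+
  have "g a \<noteq> 0"
    using axis(1) inj linear_0[OF linear] by (metis injD)
  moreover have "eigsp m (g a) 1 = range (\<lambda>c. c *\<^sub>R g a)"
    by (simp add: eigsp_image axis(4) image_image linear_scale[OF linear])
  moreover have "\<forall>u v. tau m (g a) (m u v) = m (tau m (g a) u) (tau m (g a) v)"
    using tau_mult by (simp add: tau_image[OF direct_sum] inv_mult mult)
  moreover have "\<forall>u\<in>vplus m (g a). \<forall>v\<in>vplus m (g a).
      sigma m (g a) (m u v) = m (sigma m (g a) u) (sigma m (g a) v)"
  proof (intro ballI)
    fix u v
    assume "u \<in> vplus m (g a)" "v \<in> vplus m (g a)"
    then obtain u' v' where u: "u = g u'" "u' \<in> vplus m a" and v: "v = g v'" "v' \<in> vplus m a"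
      by (auto simp: vplus_image)
    \<comment> \<open>sigma is determined only on V_+, so the product must stay there\<close>
    have "m u' v' \<in> vplus m a"
      using bilinear direct_sum tau_mult u(2) v(2) by (rule vplus_mult_closed)
    then show "sigma m (g a) (m u v) = m (sigma m (g a) u) (sigma m (g a) v)"
      using sigma_image[OF bilinear direct_sum] sigma_mult u v by (simp flip: mult)
  qed
  ultimately show ?thesis
    using eigsp_direct_sum_image[OF direct_sum] axis(2,3) isometry mult[of a a]
    unfolding majorana_axis_def direct_sum4_def by simp
qed

end

lemma sigma_algebra_automorphism:
  assumes "bilinear m" "majorana_axis B m a" "vplus m a = UNIV"
  shows "algebra_automorphism m (sigma m a)"
proof (rule algebra_automorphism.intro)
  have direct_sum: "eigsp_direct_sum m a"
    using assms(2) by (rule majorana_axis_eigsp_direct_sum)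
  show "linear (sigma m a)"
    using sigma_add[OF assms(1) direct_sum] sigma_scaleR[OF assms(1) direct_sum] assms(3)
    by (intro linearI) simp_all
  show "bij (sigma m a)"
    using sigma_involutive[OF assms(1) direct_sum] assms(3) by (intro involuntory_imp_bij) simp
  show "sigma m a (m u v) = m (sigma m a u) (sigma m a v)" for u v
    using assms(2,3) unfolding majorana_axis_def by blast
qed

theorem mainTheorem1:
  fixes B :: "'v::real_vector \<Rightarrow> 'v \<Rightarrow> real" and m :: "'v \<Rightarrow> 'v \<Rightarrow> 'v"
    and A :: "'v set" and a0 a1 :: 'v
  assumes "majorana_algebra B m A"
    and "a0 \<in> A" and "a1 \<in> A"
    and "tau m a1 = id"
  shows "majorana_axis B m (sigma m a1 a0) \<and>
         tau m (sigma m a1 a0) = sigma m a1 \<circ> tau m a0 \<circ> inv (sigma m a1)"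
proof -
  have space: "majorana_space B m" and ax0: "majorana_axis B m a0" and ax1: "majorana_axis B m a1"
    using assms(1-3) unfolding majorana_algebra_def by auto
  have bilinear: "bilinear m"
    using space by (rule majorana_space_bilinear)
  have direct_sum: "eigsp_direct_sum m a0" "eigsp_direct_sum m a1"
    using ax0 ax1 by (simp_all add: majorana_axis_eigsp_direct_sum)
  have vplus_UNIV: "vplus m a1 = UNIV"
    using tau_eq_self_iff[OF bilinear direct_sum(2)] assms(4) by auto
  interpret algebra_automorphism m "sigma m a1"
    using bilinear ax1 vplus_UNIV by (rule sigma_algebra_automorphism)
  have "majorana_axis B m (sigma m a1 a0)"
    using space sigma_isometry[OF bilinear direct_sum(2) space] ax0 vplus_UNIV
    by (intro majorana_axis_image) simp_all
  moreover have "tau m (sigma m a1 a0) = sigma m a1 \<circ> tau m a0 \<circ> inv (sigma m a1)"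
    using direct_sum(1) by (rule tau_image)
  ultimately show ?thesis ..
qed

end
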